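(* Let $E=(\mathbb{R}^n,\|\cdot\|)$ be a normed space in which the unit vectors $e_1,\dots,e_n$ have norm one, and let $e_1^*,\dots,e_n^*$ be the coordinate functionals. Define $c_1=\max\{c\ge0:\forall A\subset\{1,\dots,n\}\ \exists x^*\in B_{E^*}:\ x^*(e_i)\ge c\ (i\in A),\ x^*(e_i)=0\ (i\notin A)\}$, $c_2=\max\{c\ge0:\sum_i b_ie_i^*\in B_{E^*}\text{ whenever }\max_i|b_i|\le c\}$, $c_3=\min\{\|\sum_{i=1}^na_ie_i\|:\sum_{i=1}^n|a_i|=1\}$. Then $c_1\ge c_2=c_3\ge\frac12c_1$.
   Context: $B_{E^*}$ is the closed unit ball of the dual space $E^*$. *)

theory Defs
  imports "HOL-Analysis.Analysis"
begin

definition is_norm :: "(real^'n \<Rightarrow> real) \<Rightarrow> bool" where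
  "is_norm N \<longleftrightarrow> (\<forall>x. N x = 0 \<longleftrightarrow> x = 0) \<and> (\<forall>c x. N (c *\<^sub>R x) = \<bar>c\<bar> * N x)
                 \<and> (\<forall>x y. N (x + y) \<le> N x + N y)"

definition dual_ball :: "(real^'n \<Rightarrow> real) \<Rightarrow> (real^'n \<Rightarrow> real) set" where
  "dual_ball N = {f. linear f \<and> (\<forall>x. \<bar>f x\<bar> \<le> N x)}"

definition coord_functional :: "('n::finite \<Rightarrow> real) \<Rightarrow> real^'n \<Rightarrow> real" where
  "coord_functional b = (\<lambda>x. \<Sum>i\<in>UNIV. b i * x $ i)"

definition c1 :: "(real^'n::finite \<Rightarrow> real) \<Rightarrow> real" where
  "c1 N = Sup {c. c \<ge> 0 \<and> (\<forall>A::'n set. \<exists>f\<in>dual_ball N.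
              (\<forall>i\<in>A. f (axis i 1) \<ge> c) \<and> (\<forall>i. i \<notin> A \<longrightarrow> f (axis i 1) = 0))}"

definition c2 :: "(real^'n::finite \<Rightarrow> real) \<Rightarrow> real" where
  "c2 N = Sup {c. c \<ge> 0 \<and> (\<forall>b::'n \<Rightarrow> real. (\<forall>i. \<bar>b i\<bar> \<le> c) \<longrightarrow> coord_functional b \<in> dual_ball N)}"

definition c3 :: "(real^'n::finite \<Rightarrow> real) \<Rightarrow> real" where
  "c3 N = Inf {N (\<Sum>i\<in>UNIV. a i *\<^sub>R axis i 1) | a::'n \<Rightarrow> real. (\<Sum>i\<in>UNIV. \<bar>a i\<bar>) = 1}"

end

theory Submission
  imports Defs
begin

text \<open>
  Everything is compared with the \<open>\<ell>\<^sub>1\<close>-norm.  The box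
  \<open>{\<Sum>\<^sub>i b\<^sub>i e\<^sub>i\<^sup>* : |b\<^sub>i| \<le> c}\<close> is the ball dual to \<open>c\<cdot>\<ell>\<^sub>1\<close>, so it lies in \<open>B\<^sub>E\<^sub>*\<close>
  iff \<open>c\<cdot>\<ell>\<^sub>1 \<le> \<parallel>\<cdot>\<parallel>\<close>; the largest such \<open>c\<close> is \<open>c\<^sub>3\<close>, hence \<open>c\<^sub>2 = c\<^sub>3\<close>.
  As the box contains \<open>c \<Sum>\<^sub>i\<^sub>\<in>\<^sub>A e\<^sub>i\<^sup>*\<close>, also \<open>c\<^sub>2 \<le> c\<^sub>1\<close>.  Conversely, if \<open>c\<close> is
  admissible for \<open>c\<^sub>1\<close>, the functionals chosen for the positive and for the
  negative support of \<open>x\<close> bound \<open>c\<close> times the positive and the negative part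
  of \<open>\<ell>\<^sub>1(x)\<close> by \<open>\<parallel>x\<parallel>\<close>; hence \<open>c\<cdot>\<ell>\<^sub>1 \<le> 2\<parallel>\<cdot>\<parallel>\<close> and \<open>c\<^sub>1 \<le> 2c\<^sub>3\<close>.
\<close>

lemma is_norm_zero: "is_norm N \<Longrightarrow> N 0 = 0"
  unfolding is_norm_def by blast

lemma is_norm_scaleR: "is_norm N \<Longrightarrow> N (c *\<^sub>R x) = \<bar>c\<bar> * N x"
  unfolding is_norm_def by blast

lemma is_norm_minus: "is_norm N \<Longrightarrow> N (- x) = N x"
  using is_norm_scaleR[of N "-1" x] by simp

lemma is_norm_nonneg:
  assumes "is_norm N"
  shows "0 \<le> N x"
proof -
  have "N (x + - x) \<le> N x + N (- x)"
    using assms unfolding is_norm_def by blast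
  then show ?thesis
    using is_norm_zero[OF assms] is_norm_minus[OF assms] by simp
qed

definition l1_norm :: "real^'n \<Rightarrow> real" where
  "l1_norm x = (\<Sum>i\<in>UNIV. \<bar>x $ i\<bar>)"

lemma l1_norm_nonneg: "0 \<le> l1_norm x"
  unfolding l1_norm_def by (simp add: sum_nonneg)

lemma l1_norm_scaleR: "l1_norm (c *\<^sub>R x) = \<bar>c\<bar> * l1_norm x"
  unfolding l1_norm_def by (simp add: abs_mult sum_distrib_left)

lemma l1_norm_axis: "l1_norm (axis i (1::real)) = 1"
  unfolding l1_norm_def by (simp add: axis_def if_distrib cong: if_cong)

lemma sum_axis_nth: "(\<Sum>i\<in>UNIV. a i *\<^sub>R axis i (1::real)) $ j = a j"
  by (simp add: axis_def if_distrib cong: if_cong)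

lemma sum_nth_axis: "(\<Sum>i\<in>UNIV. x $ i *\<^sub>R axis i 1) = (x::real^'n)"
  using basis_expansion[of x] by (simp add: scalar_mult_eq_scaleR)

lemma linear_eq_sum_axis:
  fixes f :: "real^'n \<Rightarrow> real"
  assumes "linear f"
  shows "f x = (\<Sum>i\<in>UNIV. x $ i * f (axis i 1))"
proof -
  have "f x = f (\<Sum>i\<in>UNIV. x $ i *\<^sub>R axis i 1)"
    by (simp add: sum_nth_axis)
  also have "\<dots> = (\<Sum>i\<in>UNIV. x $ i * f (axis i 1))"
    using assms by (simp add: linear_sum linear_scale)
  finally show ?thesis .
qed

lemma dual_ball_abs_le: "f \<in> dual_ball N \<Longrightarrow> \<bar>f x\<bar> \<le> N x"
  unfolding dual_ball_def by blast

lemma zero_in_dual_ball: "is_norm N \<Longrightarrow> (\<lambda>x. 0) \<in> dual_ball N"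
  unfolding dual_ball_def by (auto intro: linearI simp: is_norm_nonneg)

lemma linear_coord_functional: "linear (coord_functional b)"
  unfolding coord_functional_def
  by (rule linearI) (simp_all add: sum.distrib sum_distrib_left algebra_simps)

lemma coord_functional_axis: "coord_functional b (axis j 1) = b j"
  unfolding coord_functional_def by (simp add: axis_def if_distrib cong: if_cong)

lemma coord_box_subset_dual_ball_iff:
  assumes "0 \<le> c"
  shows "(\<forall>b. (\<forall>i. \<bar>b i\<bar> \<le> c) \<longrightarrow> coord_functional b \<in> dual_ball N)
         \<longleftrightarrow> (\<forall>x. c * l1_norm x \<le> N x)"
proof
  assume box: "\<forall>b. (\<forall>i. \<bar>b i\<bar> \<le> c) \<longrightarrow> coord_functional b \<in> dual_ball N"
  show "\<forall>x. c * l1_norm x \<le> N x"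
  proof
    fix x :: "real^'a"
    define b where "b i = c * sgn (x $ i)" for i
    have "\<forall>i. \<bar>b i\<bar> \<le> c"
      using assms by (simp add: b_def abs_mult abs_sgn_eq)
    then have "\<bar>coord_functional b x\<bar> \<le> N x"
      using box dual_ball_abs_le by blast
    moreover have "coord_functional b x = c * l1_norm x"
      unfolding coord_functional_def l1_norm_def b_def sum_distrib_left
      by (rule sum.cong) (auto simp: sgn_if)
    ultimately show "c * l1_norm x \<le> N x"
      by simp
  qed
next
  assume l1_le: "\<forall>x. c * l1_norm x \<le> N x"
  show "\<forall>b. (\<forall>i. \<bar>b i\<bar> \<le> c) \<longrightarrow> coord_functional b \<in> dual_ball N"
  proof (intro allI impI)
    fix b :: "'a \<Rightarrow> real"
    assume b: "\<forall>i. \<bar>b i\<bar> \<le> c"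
    have "\<bar>coord_functional b x\<bar> \<le> N x" for x
    proof -
      have "\<bar>coord_functional b x\<bar> \<le> (\<Sum>i\<in>UNIV. \<bar>b i\<bar> * \<bar>x $ i\<bar>)"
        unfolding coord_functional_def abs_mult[symmetric] by (rule sum_abs)
      also have "\<dots> \<le> c * l1_norm x"
        unfolding l1_norm_def sum_distrib_left
        by (rule sum_mono) (simp add: b mult_right_mono)
      also have "\<dots> \<le> N x"
        using l1_le by blast
      finally show ?thesis .
    qed
    then show "coord_functional b \<in> dual_ball N"
      unfolding dual_ball_def using linear_coord_functional by blast
  qed
qed

lemma c2_eq_Sup_l1_bounds: "c2 N = Sup {c. 0 \<le> c \<and> (\<forall>x. c * l1_norm x \<le> N x)}"
  unfolding c2_def by (simp only: coord_box_subset_dual_ball_iff cong: conj_cong)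

lemma c3_eq_Inf_l1_sphere: "c3 N = Inf {N x | x. l1_norm x = 1}"
  unfolding c3_def
proof (rule arg_cong[where f = Inf], intro equalityI subsetI)
  fix t
  assume "t \<in> {N (\<Sum>i\<in>UNIV. a i *\<^sub>R axis i 1) | a. (\<Sum>i\<in>UNIV. \<bar>a i\<bar>) = 1}"
  then obtain a where "t = N (\<Sum>i\<in>UNIV. a i *\<^sub>R axis i 1)" "(\<Sum>i\<in>UNIV. \<bar>a i\<bar>) = 1"
    by blast
  then show "t \<in> {N x | x. l1_norm x = 1}"
    by (intro CollectI exI[of _ "\<Sum>i\<in>UNIV. a i *\<^sub>R axis i 1"])
      (simp add: l1_norm_def sum_axis_nth del: sum_component)
next
  fix t
  assume "t \<in> {N x | x. l1_norm x = 1}"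
  then obtain x where "t = N x" "l1_norm x = 1"
    by blast
  then show "t \<in> {N (\<Sum>i\<in>UNIV. a i *\<^sub>R axis i 1) | a. (\<Sum>i\<in>UNIV. \<bar>a i\<bar>) = 1}"
    by (intro CollectI exI[of _ "\<lambda>i. x $ i"]) (simp add: l1_norm_def sum_nth_axis)
qed

lemma le_c3:
  assumes "\<forall>x. c * l1_norm x \<le> N x"
  shows "c \<le> c3 N"
  unfolding c3_eq_Inf_l1_sphere
proof (rule cInf_greatest)
  show "{N x | x. l1_norm x = 1} \<noteq> {}"
    using l1_norm_axis by blast
  show "c \<le> t" if "t \<in> {N x | x. l1_norm x = 1}" for t
  proof -
    from that obtain x where "t = N x" "l1_norm x = 1"
      by blast
    then show ?thesis
      using assms by (metis mult.right_neutral)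
  qed
qed

lemma c3_mult_l1_norm_le:
  assumes "is_norm N"
  shows "c3 N * l1_norm x \<le> N x"
proof (cases "l1_norm x = 0")
  case True
  then show ?thesis
    using is_norm_nonneg[OF assms] by simp
next
  case False
  define s where "s = l1_norm x"
  have s: "0 < s"
    using False l1_norm_nonneg[of x] unfolding s_def by linarith
  have "bdd_below {N x | x. l1_norm x = 1}"
    unfolding bdd_below_def using is_norm_nonneg[OF assms] by blast
  moreover have "l1_norm ((1 / s) *\<^sub>R x) = 1"
    using s by (simp add: l1_norm_scaleR s_def)
  ultimately have "c3 N \<le> N ((1 / s) *\<^sub>R x)"
    unfolding c3_eq_Inf_l1_sphere by (blast intro: cInf_lower)
  also have "\<dots> = N x / s"
    using s by (simp add: is_norm_scaleR[OF assms])
  finally show ?thesis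
    using s by (simp add: s_def field_simps)
qed

lemma c3_nonneg: "is_norm N \<Longrightarrow> 0 \<le> c3 N"
  by (rule le_c3) (simp add: is_norm_nonneg)

lemma c2_eq_c3:
  assumes "is_norm N"
  shows "c2 N = c3 N"
  unfolding c2_eq_Sup_l1_bounds
  using c3_nonneg[OF assms] c3_mult_l1_norm_le[OF assms] le_c3
  by (intro cSup_eq_maximum) auto

lemma pos_part_le_norm_if_separating:
  assumes "0 \<le> c" "f \<in> dual_ball N"
    and "\<forall>i. 0 < x $ i \<longrightarrow> c \<le> f (axis i 1)"
    and "\<forall>i. \<not> 0 < x $ i \<longrightarrow> f (axis i 1) = 0"
  shows "c * (\<Sum>i\<in>UNIV. max (x $ i) 0) \<le> N x"
proof -
  have "c * (\<Sum>i\<in>UNIV. max (x $ i) 0) \<le> (\<Sum>i\<in>UNIV. x $ i * f (axis i 1))"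
    unfolding sum_distrib_left
    by (rule sum_mono) (use assms in \<open>auto simp: max_def mult.commute mult_left_mono\<close>)
  also have "\<dots> = f x"
    using assms(2) unfolding dual_ball_def by (simp add: linear_eq_sum_axis[symmetric])
  also have "\<dots> \<le> N x"
    using dual_ball_abs_le[OF assms(2), of x] by linarith
  finally show ?thesis .
qed

definition c1_admissible :: "(real^'n \<Rightarrow> real) \<Rightarrow> real \<Rightarrow> bool" where
  "c1_admissible N c \<longleftrightarrow> 0 \<le> c \<and> (\<forall>A. \<exists>f\<in>dual_ball N.
     (\<forall>i\<in>A. c \<le> f (axis i 1)) \<and> (\<forall>i. i \<notin> A \<longrightarrow> f (axis i 1) = 0))"

lemma c1_eq_Sup_admissible: "c1 N = Sup {c. c1_admissible N c}"
  unfolding c1_def c1_admissible_def ..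

lemma l1_le_two_norm_if_c1_admissible:
  assumes "is_norm N" "c1_admissible N c"
  shows "c * l1_norm x \<le> 2 * N x"
proof -
  have pos_part: "c * (\<Sum>i\<in>UNIV. max (y $ i) 0) \<le> N y" for y :: "real^'a"
  proof -
    obtain f where "f \<in> dual_ball N" "\<forall>i\<in>{i. 0 < y $ i}. c \<le> f (axis i 1)"
      "\<forall>i. i \<notin> {i. 0 < y $ i} \<longrightarrow> f (axis i 1) = 0"
      using assms(2) unfolding c1_admissible_def by blast
    moreover have "0 \<le> c"
      using assms(2) unfolding c1_admissible_def by blast
    ultimately show ?thesis
      by (intro pos_part_le_norm_if_separating) auto
  qed
  have "l1_norm x = (\<Sum>i\<in>UNIV. max (x $ i) 0) + (\<Sum>i\<in>UNIV. max ((- x) $ i) 0)"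
    unfolding l1_norm_def sum.distrib[symmetric] by (rule sum.cong) auto
  then show ?thesis
    using pos_part[of x] pos_part[of "- x"] is_norm_minus[OF assms(1)]
    by (simp add: distrib_left)
qed

lemma c1_admissible_le_1:
  assumes "\<forall>i. N (axis i 1) = 1" "c1_admissible N c"
  shows "c \<le> 1"
proof -
  obtain f where f: "f \<in> dual_ball N" "\<forall>i\<in>UNIV. c \<le> f (axis i 1)"
    using assms(2) unfolding c1_admissible_def by blast
  have "c \<le> N (axis i 1)" for i
  proof -
    have "c \<le> f (axis i 1)"
      using f(2) by blast
    also have "\<dots> \<le> N (axis i 1)"
      by (rule abs_le_D1[OF dual_ball_abs_le[OF f(1)]])
    finally show ?thesis .
  qed
  then show ?thesis
    using assms(1) by simp
qed

lemma c1_admissible_if_l1_bound: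
  assumes "0 \<le> c" "\<forall>x. c * l1_norm x \<le> N x"
  shows "c1_admissible N c"
  unfolding c1_admissible_def
proof (intro conjI allI assms(1))
  fix A
  have "\<forall>b. (\<forall>i. \<bar>b i\<bar> \<le> c) \<longrightarrow> coord_functional b \<in> dual_ball N"
    using coord_box_subset_dual_ball_iff[OF assms(1)] assms(2) by blast
  then have "coord_functional (\<lambda>i. if i \<in> A then c else 0) \<in> dual_ball N"
    using assms(1) by simp
  then show "\<exists>f\<in>dual_ball N. (\<forall>i\<in>A. c \<le> f (axis i 1)) \<and> (\<forall>i. i \<notin> A \<longrightarrow> f (axis i 1) = 0)"
    by (intro bexI[of _ "coord_functional (\<lambda>i. if i \<in> A then c else 0)"])
      (auto simp: coord_functional_axis)
qed

lemma c1_le_two_c3: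
  assumes "is_norm N"
  shows "c1 N \<le> 2 * c3 N"
  unfolding c1_eq_Sup_admissible
proof (rule cSup_least)
  show "{c. c1_admissible N c} \<noteq> {}"
    using zero_in_dual_ball[OF assms] unfolding c1_admissible_def by auto
  fix c
  assume "c \<in> {c. c1_admissible N c}"
  then have "c * l1_norm x \<le> 2 * N x" for x
    using l1_le_two_norm_if_c1_admissible[OF assms] by blast
  then have "\<forall>x. c / 2 * l1_norm x \<le> N x"
    by (simp add: field_simps)
  then have "c / 2 \<le> c3 N"
    by (rule le_c3)
  then show "c \<le> 2 * c3 N"
    by simp
qed

lemma c2_le_c1:
  assumes "is_norm N" "\<forall>i. N (axis i 1) = 1"
  shows "c2 N \<le> c1 N"
  unfolding c1_eq_Sup_admissible c2_eq_Sup_l1_bounds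
proof (rule cSup_subset_mono)
  show "{c. 0 \<le> c \<and> (\<forall>x. c * l1_norm x \<le> N x)} \<noteq> {}"
    using is_norm_nonneg[OF assms(1)] by auto
  show "bdd_above {c. c1_admissible N c}"
    unfolding bdd_above_def using c1_admissible_le_1[OF assms(2)] by blast
  show "{c. 0 \<le> c \<and> (\<forall>x. c * l1_norm x \<le> N x)} \<subseteq> {c. c1_admissible N c}"
    using c1_admissible_if_l1_bound by blast
qed

theorem lemma6:
  fixes N :: "real^'n::finite \<Rightarrow> real"
  assumes "is_norm N"
    and "\<forall>i. N (axis i 1) = 1"
  shows "c1 N \<ge> c2 N \<and> c2 N = c3 N \<and> c3 N \<ge> c1 N / 2"
  using c2_le_c1[OF assms] c2_eq_c3[OF assms(1)] c1_le_two_c3[OF assms(1)] by simp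

end
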